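(* Let $\varepsilon>0$ be a real and $\ell\geq2$ an integer. There exists $t_0$ such that for every integer $t\geq t_0$ there is a constant $c>0$ such that for all positive integers $m\leq n$: if $\ell$ is odd then $z(m,n,\theta_{t,\ell})\geq c\, m^{\frac{\ell+1}{2\ell}-\varepsilon} n^{\frac{\ell+1}{2\ell}-\varepsilon}$, and if $\ell$ is even then $z(m,n,\theta_{t,\ell})\geq c\, m^{\frac12+\frac1\ell-\varepsilon} n^{\frac12-\varepsilon}$.
   Context: For integers $t,\ell\geq2$, the theta graph $\theta_{t,\ell}$ consists of $t$ internally vertex-disjoint paths of length $\ell$ between two fixed vertices. $z(m,n,F)$ is the maximum number of edges in a bipartite graph with parts of sizes $m$ and $n$ containing no copy of $F$ as a subgraph. *)

theory Defs
  imports "HOL-Analysis.Analysis"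
begin

text \<open>A bipartite graph with parts of sizes m and n: edge set
  E \<subseteq> {0..<m} \<times> {0..<n}; a vertex is Inl a (left part) or Inr b (right part).\<close>

definition bip_adj :: "(nat \<times> nat) set \<Rightarrow> nat + nat \<Rightarrow> nat + nat \<Rightarrow> bool" where
  "bip_adj E u v \<longleftrightarrow> (\<exists>a b. (a, b) \<in> E \<and>
      ((u = Inl a \<and> v = Inr b) \<or> (u = Inr b \<and> v = Inl a)))"

definition contains_theta :: "('v \<Rightarrow> 'v \<Rightarrow> bool) \<Rightarrow> nat \<Rightarrow> nat \<Rightarrow> bool" where
  "contains_theta adj t l \<longleftrightarrow> (\<exists>x y (P :: nat \<Rightarrow> nat \<Rightarrow> 'v). x \<noteq> y \<and>
      (\<forall>i<t. P i 0 = x \<and> P i l = y \<and> inj_on (P i) {0..l} \<and>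
             (\<forall>j<l. adj (P i j) (P i (Suc j)))) \<and>
      (\<forall>i<t. \<forall>i'<t. i \<noteq> i' \<longrightarrow>
          (\<forall>j\<in>{0<..<l}. \<forall>j'\<in>{0<..<l}. P i j \<noteq> P i' j')))"

definition z_theta :: "nat \<Rightarrow> nat \<Rightarrow> nat \<Rightarrow> nat \<Rightarrow> nat" where
  "z_theta m n t l = Max {card E | E. E \<subseteq> {0..<m} \<times> {0..<n} \<and>
                                   \<not> contains_theta (bip_adj E) t l}"

end

theory Submission
  imports Defs "HOL-Probability.Probability"
begin

text \<open>Alteration method. Keep each edge of K_{m,n} independently with probability p and
  delete one edge from every surviving copy of theta_{t,l}. Since a copy has t l edges, the
  resulting theta-free graph has on average at least m n p - N p^(t l) edges, where N counts
  the copies. The endpoints and interior vertices of a copy alternate between the two sides,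
  so N is at most 2 (m n)^(1 + r t) for l = 2 r + 1 and m^(2 + r t) n^((r + 1) t) +
  m^((r + 1) t) n^(2 + r t) for l = 2 r + 2. With p = m^(A - 1) n^(B - 1) / 4 for the target
  exponents A, B and t large compared with 1 / epsilon, the deleted term is at most half the
  kept one.\<close>

lemma expectation_prod_indicator_Pi_bernoulli:
  fixes K S :: "'a set" and p :: real
  assumes K: "finite K" and S: "S \<subseteq> K" and p: "0 \<le> p" "p \<le> 1"
  shows "measure_pmf.expectation (Pi_pmf K False (\<lambda>_. bernoulli_pmf p))
           (\<lambda>y. \<Prod>e\<in>S. if y e then 1 else 0) = p ^ card S"
proof -
  let ?f = "\<lambda>e v. if e \<in> S then (if v then 1 else 0) else 1 :: real"
  have "(\<lambda>y. \<Prod>e\<in>S. if y e then 1 else 0 :: real) = (\<lambda>y. \<Prod>e\<in>K. ?f e (y e))"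
    using S K by (intro ext) (simp add: prod.If_cases Int_absorb1 Int_absorb2)
  then have "measure_pmf.expectation (Pi_pmf K False (\<lambda>_. bernoulli_pmf p))
           (\<lambda>y. \<Prod>e\<in>S. if y e then 1 else 0) =
      (\<Prod>e\<in>K. measure_pmf.expectation (bernoulli_pmf p) (?f e))"
    using K by (simp only:) (rule expectation_prod_Pi_pmf, auto intro: integrable_measure_pmf_finite)
  also have "\<dots> = (\<Prod>e\<in>K. if e \<in> S then p else 1)"
    using p by (intro prod.cong) auto
  also have "\<dots> = p ^ card S"
    using K S by (simp add: prod.If_cases Int_absorb1)
  finally show ?thesis .
qed

lemma exists_ge_expectation:
  fixes M :: "'a pmf" and f :: "'a \<Rightarrow> real"
  assumes "finite (set_pmf M)"
  shows "\<exists>x\<in>set_pmf M. measure_pmf.expectation M f \<le> f x"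
proof -
  define B where "B = Max (f ` set_pmf M)"
  obtain x where x: "x \<in> set_pmf M" "f x = B"
    using Max_in[of "f ` set_pmf M"] assms set_pmf_not_empty unfolding B_def by fastforce
  have "measure_pmf.expectation M f \<le> measure_pmf.expectation M (\<lambda>_. B)"
    using assms by (intro integral_mono_AE integrable_measure_pmf_finite AE_pmfI)
      (auto simp: B_def)
  then show ?thesis using x by auto
qed

lemma card_contained_eq_sum_prod_indicator:
  assumes K: "finite K" and F: "F \<subseteq> Pow K"
  shows "real (card {S\<in>F. S \<subseteq> {e\<in>K. y e}}) = (\<Sum>S\<in>F. \<Prod>e\<in>S. if y e then 1 else 0)"
proof -
  have "(\<Prod>e\<in>S. if y e then 1 else 0 :: real) = (if S \<subseteq> {e\<in>K. y e} then 1 else 0)"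
    if S: "S \<in> F" for S
  proof (cases "S \<subseteq> {e\<in>K. y e}")
    case False
    then obtain e where "e \<in> S" "\<not> y e" using S F by blast
    moreover have "finite S" using S F K by (auto intro: finite_subset)
    ultimately show ?thesis using False by (auto simp: prod_zero_iff)
  qed (auto intro!: prod.neutral)
  then have "(\<Sum>S\<in>F. \<Prod>e\<in>S. if y e then 1 else 0) =
      (\<Sum>S\<in>F. if S \<subseteq> {e\<in>K. y e} then 1 else 0 :: real)"
    by (intro sum.cong) auto
  moreover have "finite F" using F K by (meson finite_Pow_iff finite_subset)
  ultimately show ?thesis by (simp add: sum.If_cases Int_def)
qed

lemma expectation_card_minus_contained:
  fixes K :: "'a set" and F :: "'a set set" and p :: real
  assumes K: "finite K" and F: "F \<subseteq> Pow K" and p: "0 \<le> p" "p \<le> 1"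
  defines "M \<equiv> Pi_pmf K False (\<lambda>_. bernoulli_pmf p)"
  shows "measure_pmf.expectation M
      (\<lambda>y. real (card {e\<in>K. y e}) - real (card {S\<in>F. S \<subseteq> {e\<in>K. y e}}))
    = real (card K) * p - (\<Sum>S\<in>F. p ^ card S)"
proof -
  define ind where "ind = (\<lambda>b::bool. if b then 1 else 0 :: real)"
  have finM: "finite (set_pmf M)"
    using K unfolding M_def by (subst set_Pi_pmf) auto
  have as_sums: "(\<lambda>y. real (card {e\<in>K. y e}) - real (card {S\<in>F. S \<subseteq> {e\<in>K. y e}})) =
      (\<lambda>y. (\<Sum>e\<in>K. \<Prod>e'\<in>{e}. ind (y e')) - (\<Sum>S\<in>F. \<Prod>e\<in>S. ind (y e)))"
    using K by (intro ext) (simp add: card_contained_eq_sum_prod_indicator[OF K F] ind_def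
        sum.If_cases Int_def)
  have "measure_pmf.expectation M
      (\<lambda>y. real (card {e\<in>K. y e}) - real (card {S\<in>F. S \<subseteq> {e\<in>K. y e}})) =
     (\<Sum>e\<in>K. measure_pmf.expectation M (\<lambda>y. \<Prod>e'\<in>{e}. ind (y e'))) -
     (\<Sum>S\<in>F. measure_pmf.expectation M (\<lambda>y. \<Prod>e\<in>S. ind (y e)))"
    unfolding as_sums
    by (subst Bochner_Integration.integral_diff, (rule integrable_measure_pmf_finite[OF finM])+,
        subst Bochner_Integration.integral_sum, rule integrable_measure_pmf_finite[OF finM],
        subst Bochner_Integration.integral_sum, rule integrable_measure_pmf_finite[OF finM]) simp
  also have "\<dots> = (\<Sum>e\<in>K. p) - (\<Sum>S\<in>F. p ^ card S)"
    unfolding M_def ind_def using K F p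
    by (intro arg_cong2[where f="(-)"] sum.cong refl,
        (subst expectation_prod_indicator_Pi_bernoulli; auto)+)
  finally show ?thesis by simp
qed

lemma exists_subset_card_minus_contained_ge:
  fixes K :: "'a set" and F :: "'a set set" and p :: real
  assumes K: "finite K" and F: "F \<subseteq> Pow K" and Fk: "\<And>S. S \<in> F \<Longrightarrow> k \<le> card S"
    and p: "0 \<le> p" "p \<le> 1"
  shows "\<exists>E \<subseteq> K. real (card K) * p - real (card F) * p ^ k
           \<le> real (card E) - real (card {S\<in>F. S \<subseteq> E})"
proof -
  let ?M = "Pi_pmf K False (\<lambda>_. bernoulli_pmf p)"
  have "finite (set_pmf ?M)"
    using K by (subst set_Pi_pmf) auto
  then obtain y where y: "measure_pmf.expectation ?M
      (\<lambda>y. real (card {e\<in>K. y e}) - real (card {S\<in>F. S \<subseteq> {e\<in>K. y e}}))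
    \<le> real (card {e\<in>K. y e}) - real (card {S\<in>F. S \<subseteq> {e\<in>K. y e}})"
    using exists_ge_expectation by blast
  have "(\<Sum>S\<in>F. p ^ card S) \<le> (\<Sum>S\<in>F. p ^ k)"
    using p Fk by (intro sum_mono power_decreasing) auto
  then show ?thesis
    using y expectation_card_minus_contained[OF K F p] by (intro exI[of _ "{e\<in>K. y e}"]) auto
qed

lemma exists_subset_hitting_all:
  assumes "finite E" "finite B" "\<And>S. S \<in> B \<Longrightarrow> S \<noteq> {}"
  shows "\<exists>E' \<subseteq> E. card E \<le> card E' + card B \<and> (\<forall>S\<in>B. \<not> S \<subseteq> E')"
proof -
  define D where "D = (\<lambda>S. SOME e. e \<in> S) ` B"
  have "card E \<le> card ((E - D) \<union> D)"
    using assms(1,2) unfolding D_def by (intro card_mono) auto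
  also have "\<dots> \<le> card (E - D) + card D" by (rule card_Un_le)
  also have "card D \<le> card B" unfolding D_def using assms(2) by (rule card_image_le)
  moreover have "\<not> S \<subseteq> E - D" if "S \<in> B" for S
    using that assms(3)[OF that] some_in_eq[of S] unfolding D_def by blast
  ultimately show ?thesis by (intro exI[of _ "E - D"]) auto
qed

lemma exists_subset_avoiding_family:
  fixes K :: "'a set" and F :: "'a set set" and p :: real
  assumes K: "finite K" and F: "F \<subseteq> Pow K" and Fk: "\<And>S. S \<in> F \<Longrightarrow> k \<le> card S"
    and k: "1 \<le> k" and p: "0 \<le> p" "p \<le> 1"
  shows "\<exists>E \<subseteq> K. (\<forall>S\<in>F. \<not> S \<subseteq> E) \<and> real (card K) * p - real (card F) * p ^ k \<le> card E"
proof -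
  obtain E where EK: "E \<subseteq> K" and E: "real (card K) * p - real (card F) * p ^ k
           \<le> real (card E) - real (card {S\<in>F. S \<subseteq> E})"
    using exists_subset_card_minus_contained_ge[OF K F Fk p] by blast
  have "finite F" using F K by (meson finite_Pow_iff finite_subset)
  then have "finite {S\<in>F. S \<subseteq> E}" by simp
  moreover have "S \<noteq> {}" if "S \<in> F" for S
  proof
    assume "S = {}"
    with Fk[OF that] k show False by simp
  qed
  ultimately obtain E' where "E' \<subseteq> E" "card E \<le> card E' + card {S\<in>F. S \<subseteq> E}"
      "\<forall>S\<in>{S\<in>F. S \<subseteq> E}. \<not> S \<subseteq> E'"
    using exists_subset_hitting_all[of E "{S\<in>F. S \<subseteq> E}"] finite_subset[OF EK K] by blast
  moreover from this have "\<forall>S\<in>F. \<not> S \<subseteq> E'" by blast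
  ultimately show ?thesis using EK E by (intro exI[of _ E']) auto
qed

lemma powr_mult_le_powr_mult:
  fixes M N a b A B :: real
  assumes M: "1 \<le> M" "M \<le> N" and b: "b \<le> B" and ab: "a + b \<le> A + B"
  shows "M powr a * N powr b \<le> M powr A * N powr B"
proof (cases "a \<le> A")
  case True
  with M b show ?thesis by (intro mult_mono powr_mono) auto
next
  case False
  have "M powr a * N powr b = M powr (a - A) * N powr b * M powr A"
    by (simp add: powr_add[symmetric])
  also have "\<dots> \<le> N powr (a - A) * N powr b * M powr A"
    using False M by (intro mult_right_mono powr_mono2) auto
  also have "\<dots> = N powr (a - A + b) * M powr A"
    by (simp add: powr_add)
  also have "\<dots> \<le> N powr B * M powr A"
    using M ab by (intro mult_right_mono powr_mono) auto
  finally show ?thesis by (simp add: mult.commute)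
qed

lemma monomial_times_power_powr:
  fixes M N A B :: real
  assumes "0 < M" "0 < N"
  shows "M ^ a * N ^ b * (M powr (A - 1) * N powr (B - 1) / 4) ^ k =
    (1/4) ^ k * (M powr (a + k * (A - 1)) * N powr (b + k * (B - 1)))"
proof -
  have "(M powr (A - 1) * N powr (B - 1) / 4) ^ k =
      (1/4) ^ k * (M powr (k * (A - 1)) * N powr (k * (B - 1)))"
    using assms by (simp add: power_mult_distrib power_divide powr_power)
  moreover have "M ^ a = M powr a" "N ^ b = N powr b"
    using assms by (simp_all add: powr_realpow)
  ultimately show ?thesis
    by (simp add: powr_add mult_ac)
qed

lemma monomial_cost_le:
  fixes M N A B :: real and a b k :: nat
  assumes M: "1 \<le> M" "M \<le> N" and k: "2 \<le> k"
    and b: "b + k * (B - 1) \<le> B" and ab: "a + b + k * (A + B - 2) \<le> A + B"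
  shows "M ^ a * N ^ b * (M powr (A - 1) * N powr (B - 1) / 4) ^ k \<le> M powr A * N powr B / 16"
proof -
  have powrs: "M powr (a + k * (A - 1)) * N powr (b + k * (B - 1)) \<le> M powr A * N powr B"
    using M b ab by (intro powr_mult_le_powr_mult) (auto simp: algebra_simps)
  have quarter: "(1/4::real) ^ k \<le> (1/4) ^ 2"
    using k by (intro power_decreasing) auto
  have "(1/4) ^ k * (M powr (a + k * (A - 1)) * N powr (b + k * (B - 1)))
      \<le> (1/4) ^ 2 * (M powr A * N powr B)"
    by (rule mult_mono[OF quarter powrs]) auto
  then show ?thesis
    using M by (simp add: monomial_times_power_powr power2_eq_square)
qed

lemma alteration_powr_lower_bound:
  fixes z M N A B :: real and k a1 b1 a2 b2 :: nat
  assumes M: "1 \<le> M" "M \<le> N" and AB: "A \<le> 1" "B \<le> 1" and k: "2 \<le> k"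
    and exps1: "b1 + k * (B - 1) \<le> B" "a1 + b1 + k * (A + B - 2) \<le> A + B"
    and exps2: "b2 + k * (B - 1) \<le> B" "a2 + b2 + k * (A + B - 2) \<le> A + B"
    and hz: "\<And>p. 0 \<le> p \<Longrightarrow> p \<le> 1 \<Longrightarrow>
      z \<ge> M * N * p - (M ^ a1 * N ^ b1 + M ^ a2 * N ^ b2) * p ^ k"
  shows "z \<ge> M powr A * N powr B / 8"
proof -
  define p where "p = M powr (A - 1) * N powr (B - 1) / 4"
  have N: "1 \<le> N" using M by simp
  have "M powr (A - 1) \<le> 1" "N powr (B - 1) \<le> 1"
    using powr_mono[of "A - 1" 0 M] powr_mono[of "B - 1" 0 N] AB M N by auto
  then have p: "0 \<le> p" "p \<le> 1"
    unfolding p_def using mult_mono[of "M powr (A - 1)" 1 "N powr (B - 1)" 1] by auto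
  have "M * N * p = M powr A * N powr B / 4"
  proof -
    have "M * M powr (A - 1) = M powr A" "N * N powr (B - 1) = N powr B"
      using M N by (simp_all add: powr_mult_base)
    then show ?thesis unfolding p_def by (metis (no_types, lifting) mult.assoc mult.left_commute times_divide_eq_right)
  qed
  moreover have "(M ^ a1 * N ^ b1 + M ^ a2 * N ^ b2) * p ^ k \<le> M powr A * N powr B / 8"
    using monomial_cost_le[OF M k exps1] monomial_cost_le[OF M k exps2]
    unfolding p_def distrib_right by linarith
  ultimately show ?thesis using hz[OF p] by linarith
qed

definition is_theta :: "('v \<Rightarrow> 'v \<Rightarrow> bool) \<Rightarrow> nat \<Rightarrow> nat \<Rightarrow> (nat \<Rightarrow> nat \<Rightarrow> 'v) \<Rightarrow> bool" where
  "is_theta adj t l P \<longleftrightarrow> (\<exists>x y. x \<noteq> y \<and>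
      (\<forall>i<t. P i 0 = x \<and> P i l = y \<and> inj_on (P i) {0..l} \<and>
             (\<forall>j<l. adj (P i j) (P i (Suc j)))) \<and>
      (\<forall>i<t. \<forall>i'<t. i \<noteq> i' \<longrightarrow>
          (\<forall>j\<in>{0<..<l}. \<forall>j'\<in>{0<..<l}. P i j \<noteq> P i' j')))"

definition bip_edge :: "nat + nat \<Rightarrow> nat + nat \<Rightarrow> nat \<times> nat" where
  "bip_edge u v = (case u of Inl a \<Rightarrow> (a, projr v) | Inr b \<Rightarrow> (projl v, b))"

definition theta_edges :: "nat \<Rightarrow> nat \<Rightarrow> (nat \<Rightarrow> nat \<Rightarrow> nat + nat) \<Rightarrow> (nat \<times> nat) set" where
  "theta_edges t l P = (\<lambda>(i,j). bip_edge (P i j) (P i (Suc j))) ` ({0..<t} \<times> {0..<l})"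

definition side :: "nat \<Rightarrow> nat \<Rightarrow> bool \<Rightarrow> (nat + nat) set" where
  "side m n b = (if b then Inl ` {0..<m} else Inr ` {0..<n})"

text \<open>A copy of the theta graph is determined by its endpoints x, y and its interior vertices
  Q (i, j), 0 < j < l; in a bipartite graph the vertex at distance j from x lies on the
  side of x iff j is even.\<close>

definition theta_frames ::
    "nat \<Rightarrow> nat \<Rightarrow> nat \<Rightarrow> nat \<Rightarrow> bool \<Rightarrow> ((nat + nat) \<times> (nat + nat) \<times> (nat \<times> nat \<Rightarrow> nat + nat)) set" where
  "theta_frames m n t l b = side m n b \<times> side m n (b = even l) \<times>
     PiE ({0..<t} \<times> {1..<l}) (\<lambda>(i,j). side m n (b = even j))"

definition frame_edges ::
    "nat \<Rightarrow> nat \<Rightarrow> (nat + nat) \<times> (nat + nat) \<times> (nat \<times> nat \<Rightarrow> nat + nat) \<Rightarrow> (nat \<times> nat) set" where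
  "frame_edges t l = (\<lambda>(x, y, Q). theta_edges t l (\<lambda>i j. if j = 0 then x else if j = l then y else Q (i, j)))"

lemma contains_theta_iff: "contains_theta adj t l \<longleftrightarrow> (\<exists>P. is_theta adj t l P)"
  unfolding contains_theta_def is_theta_def by blast

lemma bip_adj_mono: "bip_adj E u v \<Longrightarrow> E \<subseteq> E' \<Longrightarrow> bip_adj E' u v"
  unfolding bip_adj_def by blast

lemma bip_edge_mem: "bip_adj E u v \<Longrightarrow> bip_edge u v \<in> E"
  unfolding bip_adj_def bip_edge_def by auto

lemma bip_edge_eq_imp_eq_doubleton:
  assumes "bip_adj E u v" "bip_adj E' u' v'" "bip_edge u v = bip_edge u' v'"
  shows "{u, v} = {u', v'}"
  using assms unfolding bip_adj_def by (elim exE conjE disjE) (auto simp: bip_edge_def)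

lemma is_theta_mono:
  assumes "is_theta adj t l P" "\<And>u v. adj u v \<Longrightarrow> adj' u v"
  shows "is_theta adj' t l P"
proof -
  obtain x y where "x \<noteq> y"
    and "\<forall>i<t. P i 0 = x \<and> P i l = y \<and> inj_on (P i) {0..l} \<and> (\<forall>j<l. adj (P i j) (P i (Suc j)))"
    and "\<forall>i<t. \<forall>i'<t. i \<noteq> i' \<longrightarrow> (\<forall>j\<in>{0<..<l}. \<forall>j'\<in>{0<..<l}. P i j \<noteq> P i' j')"
    using assms(1) unfolding is_theta_def by blast
  with assms(2) show ?thesis unfolding is_theta_def by (intro exI[of _ x] exI[of _ y]) simp
qed

lemma theta_edges_subset: "is_theta (bip_adj E) t l P \<Longrightarrow> theta_edges t l P \<subseteq> E"
  unfolding is_theta_def theta_edges_def by (fastforce intro!: bip_edge_mem)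

lemma theta_edges_cong:
  "(\<And>i j. i < t \<Longrightarrow> j \<le> l \<Longrightarrow> P i j = P' i j) \<Longrightarrow> theta_edges t l P = theta_edges t l P'"
  unfolding theta_edges_def by (intro image_cong) auto

lemma is_theta_interior_vertex_unique:
  assumes "is_theta adj t l P" "i < t" "i' < t" "0 < j" "j < l" "j' \<le> l" "P i j = P i' j'"
  shows "i = i' \<and> j = j'"
proof -
  obtain x y where ends: "\<forall>i<t. P i 0 = x \<and> P i l = y"
    and inj: "\<forall>i<t. inj_on (P i) {0..l}"
    and disj: "\<forall>i<t. \<forall>i'<t. i \<noteq> i' \<longrightarrow> (\<forall>j\<in>{0<..<l}. \<forall>j'\<in>{0<..<l}. P i j \<noteq> P i' j')"
    using assms(1) unfolding is_theta_def by blast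
  have "i = i'"
  proof (rule ccontr)
    assume "i \<noteq> i'"
    then have "j' = 0 \<or> j' = l" using disj assms by force
    then have "P i j = P i 0 \<or> P i j = P i l" using ends assms by auto
    then show False using inj_onD[OF inj[rule_format, OF \<open>i < t\<close>]] assms by fastforce
  qed
  then show ?thesis using inj_onD[OF inj[rule_format, OF \<open>i < t\<close>]] assms by auto
qed

lemma card_theta_edges:
  assumes theta: "is_theta (bip_adj E) t l P" and l: "2 \<le> l"
  shows "card (theta_edges t l P) = t * l"
proof -
  have path: "inj_on (P i) {0..l} \<and> (\<forall>j<l. bip_adj E (P i j) (P i (Suc j)))" if "i < t" for i
    using theta that unfolding is_theta_def by blast
  have "inj_on (\<lambda>(i,j). bip_edge (P i j) (P i (Suc j))) ({0..<t} \<times> {0..<l})"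
  proof (rule inj_onI, clarsimp)
    fix i j i' j'
    assume ij: "i < t" "j < l" "i' < t" "j' < l"
      and eq: "bip_edge (P i j) (P i (Suc j)) = bip_edge (P i' j') (P i' (Suc j'))"
    have same: "{P i j, P i (Suc j)} = {P i' j', P i' (Suc j')}"
      using bip_edge_eq_imp_eq_doubleton[OF _ _ eq] path ij by blast
    \<comment> \<open>since l \<ge> 2, every edge of the path has an interior endpoint\<close>
    define k where "k = (if j = 0 then 1 else j)"
    have k: "0 < k" "k < l" "k = j \<or> k = Suc j" using ij l unfolding k_def by auto
    then obtain k' where k': "k' = j' \<or> k' = Suc j'" "P i k = P i' k'" using same by auto
    then have "k' \<le> l" using ij by auto
    with k' have "i = i'"
      using is_theta_interior_vertex_unique[OF theta ij(1,3) k(1,2)] by blast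
    then have "P i ` {j, Suc j} = P i ` {j', Suc j'}" using same by simp
    then have "{j, Suc j} = {j', Suc j'}"
      using inj_on_image_eq_iff[OF conjunct1[OF path[OF ij(1)]], of "{j, Suc j}" "{j', Suc j'}"] ij
      by auto
    then show "i = i' \<and> j = j'" using \<open>i = i'\<close> by (auto simp: doubleton_eq_iff)
  qed
  then show ?thesis unfolding theta_edges_def by (simp add: card_image card_cartesian_product)
qed

lemma bip_adj_grid_sides:
  assumes "bip_adj ({0..<m} \<times> {0..<n}) u v"
  shows "u \<in> side m n (isl u) \<and> v \<in> side m n (isl v) \<and> isl v = (\<not> isl u)"
  using assms unfolding bip_adj_def side_def by auto

lemma is_theta_vertex_side:
  assumes theta: "is_theta (bip_adj ({0..<m} \<times> {0..<n})) t l P"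
    and i: "i < t" and j: "j \<le> l" and l: "1 \<le> l"
  shows "P i j \<in> side m n (isl (P i 0) = even j)"
proof -
  have adj: "bip_adj ({0..<m} \<times> {0..<n}) (P i j) (P i (Suc j))" if "j < l" for j
    using theta i that unfolding is_theta_def by blast
  have "isl (P i j) = (isl (P i 0) = even j)" using j
  proof (induction j)
    case (Suc j)
    then show ?case using bip_adj_grid_sides[OF adj[of j]] by simp
  qed simp
  moreover have "P i j \<in> side m n (isl (P i j))"
  proof (cases "j < l")
    case False
    then have "j = Suc (l - 1)" using j l by simp
    then show ?thesis using conjunct1[OF conjunct2[OF bip_adj_grid_sides[OF adj[of "l - 1"]]]] l
      by simp
  qed (use bip_adj_grid_sides[OF adj] in simp)
  ultimately show ?thesis by simp
qed

lemma theta_edge_sets_subset_frame_edges: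
  assumes t: "1 \<le> t" and l: "1 \<le> l"
  shows "{theta_edges t l P | P. is_theta (bip_adj ({0..<m} \<times> {0..<n})) t l P}
    \<subseteq> frame_edges t l ` (theta_frames m n t l True \<union> theta_frames m n t l False)"
proof clarify
  fix P assume theta: "is_theta (bip_adj ({0..<m} \<times> {0..<n})) t l P"
  obtain x y where ends: "\<forall>i<t. P i 0 = x \<and> P i l = y"
    using theta unfolding is_theta_def by blast
  define Q where "Q = restrict (\<lambda>(i,j). P i j) ({0..<t} \<times> {1..<l})"
  have "x \<in> side m n (isl x)" "y \<in> side m n (isl x = even l)"
    using is_theta_vertex_side[OF theta, of 0 0] is_theta_vertex_side[OF theta, of 0 l] ends t l
    by simp_all
  moreover have "Q \<in> PiE ({0..<t} \<times> {1..<l}) (\<lambda>(i,j). side m n (isl x = even j))"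
    unfolding Q_def using is_theta_vertex_side[OF theta] ends l by (auto simp: PiE_def Pi_def)
  ultimately have "(x, y, Q) \<in> theta_frames m n t l True \<union> theta_frames m n t l False"
    unfolding theta_frames_def by (cases "isl x") auto
  moreover have "frame_edges t l (x, y, Q) = theta_edges t l P"
    unfolding frame_edges_def using ends by (auto intro!: theta_edges_cong simp: Q_def)
  ultimately show "theta_edges t l P \<in> frame_edges t l ` (theta_frames m n t l True \<union> theta_frames m n t l False)"
    by force
qed

lemma prod_alternating:
  "(\<Prod>j\<in>{1..<Suc l}. if even j then u else v) = (u::nat) ^ (l div 2) * v ^ (Suc l div 2)"
proof (induction l)
  case (Suc l)
  then show ?case
    by (cases "even l") (auto simp: prod.atLeastLessThan_Suc elim!: evenE oddE)
qed simp

lemma card_side: "card (side m n b) = (if b then m else n)"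
  by (auto simp: side_def card_image)

lemma card_theta_frames:
  assumes "1 \<le> l"
  shows "card (theta_frames m n t l b) = (if b then m else n) * (if b = even l then m else n) *
    ((if b then m else n) ^ ((l - 1) div 2) * (if b then n else m) ^ (l div 2)) ^ t"
proof -
  have "card (PiE ({0..<t} \<times> {1..<l}) (\<lambda>(i,j). side m n (b = even j))) =
      (\<Prod>(i,j)\<in>{0..<t} \<times> {1..<l}. if b = even j then m else n)"
    by (simp add: card_PiE card_side case_prod_unfold)
  also have "\<dots> = (\<Prod>j\<in>{1..<l}. if b = even j then m else n) ^ t"
    by (subst prod.cartesian_product[symmetric]) simp
  also have "(\<Prod>j\<in>{1..<l}. if b = even j then m else n) =
      (\<Prod>j\<in>{1..<Suc (l - 1)}. if even j then (if b then m else n) else (if b then n else m))"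
    using assms by (intro prod.cong) auto
  also have "\<dots> = (if b then m else n) ^ ((l - 1) div 2) * (if b then n else m) ^ (l div 2)"
    unfolding prod_alternating using assms by simp
  finally show ?thesis unfolding theta_frames_def by (simp add: card_cartesian_product card_side)
qed

lemma finite_theta_frames: "finite (theta_frames m n t l b)"
  unfolding theta_frames_def side_def by (intro finite_cartesian_product finite_PiE) auto

lemma z_theta_ge_alteration:
  assumes t: "1 \<le> t" and l: "2 \<le> l" and p: "0 \<le> p" "p \<le> 1"
  shows "real m * real n * p
     - real (card (theta_frames m n t l True) + card (theta_frames m n t l False)) * p ^ (t * l)
     \<le> z_theta m n t l"
proof -
  define K where "K = {0..<m} \<times> {0..<n}"
  define F where "F = {theta_edges t l P | P. is_theta (bip_adj K) t l P}"
  have FK: "F \<subseteq> Pow K" unfolding F_def using theta_edges_subset[where E=K] by blast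
  have Fc: "t * l \<le> card S" if "S \<in> F" for S
    using that card_theta_edges[OF _ l] unfolding F_def by auto
  have "card F \<le> card (frame_edges t l ` (theta_frames m n t l True \<union> theta_frames m n t l False))"
    using theta_edge_sets_subset_frame_edges[OF t, of l m n] l unfolding F_def K_def
    by (intro card_mono finite_imageI) (auto simp: finite_theta_frames)
  also have "\<dots> \<le> card (theta_frames m n t l True \<union> theta_frames m n t l False)"
    by (intro card_image_le) (simp add: finite_theta_frames)
  also have "\<dots> \<le> card (theta_frames m n t l True) + card (theta_frames m n t l False)"
    by (rule card_Un_le)
  finally have "real (card F) * p ^ (t * l)
      \<le> real (card (theta_frames m n t l True) + card (theta_frames m n t l False)) * p ^ (t * l)"
    using p by (intro mult_right_mono) auto
  moreover have "finite K" "1 \<le> t * l" using t l unfolding K_def by simp_all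
  then obtain E where EK: "E \<subseteq> K" and free: "\<forall>S\<in>F. \<not> S \<subseteq> E"
    and E: "real (card K) * p - real (card F) * p ^ (t * l) \<le> card E"
    using exists_subset_avoiding_family[OF _ FK Fc _ p] by blast
  moreover have "\<not> contains_theta (bip_adj E) t l"
  proof
    assume "contains_theta (bip_adj E) t l"
    then obtain P where P: "is_theta (bip_adj E) t l P" unfolding contains_theta_iff ..
    then have "is_theta (bip_adj K) t l P" using EK by (blast intro: is_theta_mono bip_adj_mono)
    then have "theta_edges t l P \<in> F" unfolding F_def by blast
    then show False using free theta_edges_subset[OF P] by blast
  qed
  then have "card E \<le> z_theta m n t l"
    unfolding z_theta_def
  proof (intro Max_ge)
    show "finite {card E |E. E \<subseteq> {0..<m} \<times> {0..<n} \<and> \<not> contains_theta (bip_adj E) t l}"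
      by (rule finite_subset[of _ "card ` Pow ({0..<m} \<times> {0..<n})"]) auto
  qed (use EK K_def in blast)
  ultimately show ?thesis unfolding K_def by (simp add: card_cartesian_product)
qed

lemma z_theta_odd_lower_bound:
  fixes \<epsilon> :: real
  assumes l: "l = 2 * r + 1" "1 \<le> r" and t: "1 \<le> t" and \<epsilon>: "0 < \<epsilon>"
    and large: "2 + \<epsilon> \<le> \<epsilon> * real (t * l)" and mn: "1 \<le> m" "m \<le> n"
  defines "a \<equiv> (real l + 1) / (2 * real l) - \<epsilon>"
  shows "real m powr a * real n powr a / 8 \<le> z_theta m n t l"
proof -
  have "card (theta_frames m n t l True) + card (theta_frames m n t l False) =
      m ^ (1 + r * t) * n ^ (1 + r * t) + m ^ (1 + r * t) * n ^ (1 + r * t)"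
    using l by (simp add: card_theta_frames power_mult_distrib power_add power_mult mult_ac)
  then have bound: "real m * real n * p - (real m ^ (1 + r * t) * real n ^ (1 + r * t)
      + real m ^ (1 + r * t) * real n ^ (1 + r * t)) * p ^ (t * l) \<le> z_theta m n t l"
    if "0 \<le> p" "p \<le> 1" for p
    using z_theta_ge_alteration[OF t _ that, of l m n] l by (simp flip: of_nat_power of_nat_mult)
  have "real (t * l) * (a - 1) = - (real r * real t) - \<epsilon> * real (t * l)"
    unfolding a_def l by (simp add: field_simps)
  moreover have "- \<epsilon> \<le> a" unfolding a_def l by (simp add: field_simps)
  moreover have "real (1 + r * t) = 1 + real r * real t"
    "real (1 + r * t + (1 + r * t)) = 2 + 2 * (real r * real t)" by simp_all
  moreover have "real (t * l) * (a + a - 2) = 2 * (real (t * l) * (a - 1))" by (simp add: algebra_simps)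
  ultimately have exps: "real (1 + r * t) + real (t * l) * (a - 1) \<le> a"
    "real (1 + r * t + (1 + r * t)) + real (t * l) * (a + a - 2) \<le> a + a"
    using large by linarith+
  have "a \<le> 1" unfolding a_def l using \<epsilon> by (simp add: field_simps)
  moreover have "2 \<le> t * l" using l mult_le_mono1[OF t, of l] by simp
  moreover have "1 \<le> real m" "real m \<le> real n" using mn by simp_all
  ultimately show ?thesis
    using alteration_powr_lower_bound[OF _ _ _ _ _ exps exps bound] by simp
qed

lemma z_theta_even_lower_bound:
  fixes \<epsilon> :: real
  assumes l: "l = 2 * r + 2" and t: "1 \<le> t" and \<epsilon>: "0 < \<epsilon>"
    and large: "2 + \<epsilon> \<le> \<epsilon> * real (t * l)" and mn: "1 \<le> m" "m \<le> n"
  defines "A \<equiv> 1/2 + 1 / real l - \<epsilon>" and "B \<equiv> 1/2 - \<epsilon>"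
  shows "real m powr A * real n powr B / 8 \<le> z_theta m n t l"
proof -
  have "card (theta_frames m n t l True) + card (theta_frames m n t l False) =
      m ^ (2 + r * t) * n ^ ((r + 1) * t) + m ^ ((r + 1) * t) * n ^ (2 + r * t)"
    using l by (simp add: card_theta_frames power_mult_distrib power_add power_mult mult_ac)
  then have bound: "real m * real n * p - (real m ^ (2 + r * t) * real n ^ ((r + 1) * t)
      + real m ^ ((r + 1) * t) * real n ^ (2 + r * t)) * p ^ (t * l) \<le> z_theta m n t l"
    if "0 \<le> p" "p \<le> 1" for p
    using z_theta_ge_alteration[OF t _ that, of l m n] l by (simp flip: of_nat_power of_nat_mult)
  have "real (t * l) * (A - 1) = - (real r * real t) - \<epsilon> * real (t * l)"
    "real (t * l) * (B - 1) = - (real r * real t) - real t - \<epsilon> * real (t * l)"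
    unfolding A_def B_def l by (simp_all add: field_simps)
  moreover have "real (t * l) * (A + B - 2) = real (t * l) * (A - 1) + real (t * l) * (B - 1)"
    by (simp add: algebra_simps)
  moreover have "B \<le> A" "2 * B = 1 - 2 * \<epsilon>" "1 \<le> real t" using t by (simp_all add: A_def B_def)
  ultimately have exps: "real ((r + 1) * t) + real (t * l) * (B - 1) \<le> B"
    "real (2 + r * t + (r + 1) * t) + real (t * l) * (A + B - 2) \<le> A + B"
    "real (2 + r * t) + real (t * l) * (B - 1) \<le> B"
    "real ((r + 1) * t + (2 + r * t)) + real (t * l) * (A + B - 2) \<le> A + B"
    using large
    by (simp_all only: of_nat_add of_nat_mult of_nat_1 of_nat_numeral distrib_right mult_1)
  have "A \<le> 1" "B \<le> 1" unfolding A_def B_def l using \<epsilon> by (simp_all add: field_simps)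
  moreover have "2 \<le> t * l" using l mult_le_mono1[OF t, of l] by simp
  moreover have "1 \<le> real m" "real m \<le> real n" using mn by simp_all
  ultimately show ?thesis
    using alteration_powr_lower_bound[OF _ _ _ _ _ exps bound] by simp
qed

lemma two_plus_le_mult_of_ceiling_le:
  fixes \<epsilon> :: real
  assumes "0 < \<epsilon>" "1 \<le> l" "nat \<lceil>(2 + \<epsilon>) / \<epsilon>\<rceil> + 1 \<le> t"
  shows "2 + \<epsilon> \<le> \<epsilon> * real (t * l)"
proof -
  have "(2 + \<epsilon>) / \<epsilon> \<le> real t"
    using assms(3) real_nat_ceiling_ge[of "(2 + \<epsilon>) / \<epsilon>"] by linarith
  then have "2 + \<epsilon> \<le> \<epsilon> * t" using assms(1) by (simp add: field_simps)
  also have "\<dots> \<le> \<epsilon> * real (t * l)"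
    using assms mult_left_mono[of 1 "real l" "real t"] by (intro mult_left_mono) auto
  finally show ?thesis .
qed

theorem mainTheorem9:
  fixes \<epsilon> :: real and l :: nat
  assumes "\<epsilon> > 0" and "l \<ge> 2"
  shows "\<exists>t0::nat. \<forall>t\<ge>t0. \<exists>c::real. c > 0 \<and>
    (\<forall>m n :: nat. 0 < m \<and> m \<le> n \<longrightarrow>
      (odd l \<longrightarrow> real (z_theta m n t l) \<ge>
          c * real m powr ((real l + 1) / (2 * real l) - \<epsilon>)
            * real n powr ((real l + 1) / (2 * real l) - \<epsilon>)) \<and>
      (even l \<longrightarrow> real (z_theta m n t l) \<ge>
          c * real m powr (1/2 + 1 / real l - \<epsilon>) * real n powr (1/2 - \<epsilon>)))"
proof (intro exI[of _ "nat \<lceil>(2 + \<epsilon>) / \<epsilon>\<rceil> + 1"] allI impI exI[of _ "1/8"] conjI)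
  fix t m n :: nat
  assume t: "nat \<lceil>(2 + \<epsilon>) / \<epsilon>\<rceil> + 1 \<le> t" and mn: "0 < m \<and> m \<le> n"
  have large: "2 + \<epsilon> \<le> \<epsilon> * real (t * l)"
    using two_plus_le_mult_of_ceiling_le[OF assms(1) _ t] assms(2) by simp
  have t1: "1 \<le> t" and mn': "1 \<le> m" "m \<le> n" using t mn by auto
  show "1/8 * real m powr ((real l + 1) / (2 * real l) - \<epsilon>)
      * real n powr ((real l + 1) / (2 * real l) - \<epsilon>) \<le> z_theta m n t l" if "odd l"
  proof -
    have "l = 2 * (l div 2) + 1" "1 \<le> l div 2" using that assms(2) by (auto elim!: oddE)
    from z_theta_odd_lower_bound[OF this t1 assms(1) large mn'] show ?thesis by simp
  qed
  show "1/8 * real m powr (1/2 + 1 / real l - \<epsilon>) * real n powr (1/2 - \<epsilon>) \<le> z_theta m n t l"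
    if "even l"
  proof -
    have "l = 2 * (l div 2 - 1) + 2" using that assms(2) by (auto elim!: evenE)
    from z_theta_even_lower_bound[OF this t1 assms(1) large mn'] show ?thesis by simp
  qed
qed simp

end
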